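(* Let $\Gamma$ be a group acting by homeomorphisms on a Hausdorff topological space $\Omega$. Assume the action is strongly hyperbolic on $\Omega$ and strongly faithful on $L_\Gamma$. Then: (i) every non-empty closed $\Gamma$-invariant subset of $\Omega$ contains $\overline{L_\Gamma}$. Let moreover $N$ be a normal subgroup of $\Gamma$ containing a hyperbolic homeomorphism. Then: (ii) $\overline{L_N}=\overline{L_\Gamma}$; (iii) $N$ is a Powers group.
   Context: A homeomorphism $\gamma$ of $\Omega$ is hyperbolic if there are two points $\alpha(\gamma),\omega(\gamma)\in\Omega$ fixed by $\gamma$ such that for all neighbourhoods $U$ of $\alpha(\gamma)$ and $V$ of $\omega(\gamma)$ one has $\gamma^n(\Omega\setminus U)\subset V$ and $\gamma^{-n}(\Omega\setminus V)\subset U$ for all large $n$. Two hyperbolic homeomorphisms are transverse if they have no common fixed point; an action is strongly hyperbolic if the group contains two transverse hyperbolic homeomorphisms. For a group $\Lambda$ of homeomorphisms, $L_\Lambda=\{\eta\in\Omega\mid \eta=\omega(\gamma)\text{ for some hyperbolic }\gamma\in\Lambda\}$. An action on a set $X$ is strongly faithful if for every finite subset $F$ of the group not containing $1$ there is $x\in X$ with $\gamma(x)\neq x$ for all $\gamma\in F$. A group $N\neq\{1\}$ is a Powers group if for every finite $F\subset N\setminus\{1\}$ and integer $k\ge1$ there are a partition $N=C\sqcup D$ and $\gamma_1,\dots,\gamma_k\in N$ with $fC\cap C=\emptyset$ ($f\in F$) and $\gamma_iD\cap\gamma_jD=\emptyset$ ($i\ne j$). *)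

theory Defs
  imports "HOL-Analysis.Analysis" "HOL-Algebra.Group_Action"
begin

definition hyperbolic_with :: "('a::topological_space \<Rightarrow> 'a) \<Rightarrow> 'a \<Rightarrow> 'a \<Rightarrow> bool" where
  "hyperbolic_with f a w \<longleftrightarrow> f a = a \<and> f w = w \<and>
     (\<forall>U V. open U \<longrightarrow> a \<in> U \<longrightarrow> open V \<longrightarrow> w \<in> V \<longrightarrow>
        (\<exists>n0. \<forall>n\<ge>n0. (f ^^ n) ` (UNIV - U) \<subseteq> V \<and> (inv_into UNIV f ^^ n) ` (UNIV - V) \<subseteq> U))"

definition hyperbolic :: "('a::topological_space \<Rightarrow> 'a) \<Rightarrow> bool" where
  "hyperbolic f \<longleftrightarrow> (\<exists>a w. hyperbolic_with f a w)"

definition transverse :: "('a \<Rightarrow> 'a) \<Rightarrow> ('a \<Rightarrow> 'a) \<Rightarrow> bool" where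
  "transverse f g \<longleftrightarrow> \<not> (\<exists>x. f x = x \<and> g x = x)"

definition limset :: "('a::topological_space \<Rightarrow> 'a) set \<Rightarrow> 'a set" where
  "limset \<Lambda> = {\<eta>. \<exists>f\<in>\<Lambda>. \<exists>a. hyperbolic_with f a \<eta>}"

definition homeo_action :: "('g, 'm) monoid_scheme \<Rightarrow> ('g \<Rightarrow> 'a::topological_space \<Rightarrow> 'a) \<Rightarrow> bool" where
  "homeo_action G \<phi> \<longleftrightarrow> group_action G UNIV \<phi> \<and> (\<forall>g\<in>carrier G. continuous_on UNIV (\<phi> g))"

definition strongly_hyperbolic :: "('g, 'm) monoid_scheme \<Rightarrow> ('g \<Rightarrow> 'a::topological_space \<Rightarrow> 'a) \<Rightarrow> bool" where
  "strongly_hyperbolic G \<phi> \<longleftrightarrow> (\<exists>g\<in>carrier G. \<exists>h\<in>carrier G.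
      hyperbolic (\<phi> g) \<and> hyperbolic (\<phi> h) \<and> transverse (\<phi> g) (\<phi> h))"

definition strongly_faithful_on :: "('g, 'm) monoid_scheme \<Rightarrow> ('g \<Rightarrow> 'a \<Rightarrow> 'a) \<Rightarrow> 'a set \<Rightarrow> bool" where
  "strongly_faithful_on G \<phi> X \<longleftrightarrow> (\<forall>F. finite F \<longrightarrow> F \<subseteq> carrier G - {\<one>\<^bsub>G\<^esub>} \<longrightarrow>
      (\<exists>x\<in>X. \<forall>g\<in>F. \<phi> g x \<noteq> x))"

definition powers_group :: "('g, 'm) monoid_scheme \<Rightarrow> bool" where
  "powers_group H \<longleftrightarrow> carrier H \<noteq> {\<one>\<^bsub>H\<^esub>} \<and>
     (\<forall>F (k::nat). finite F \<longrightarrow> F \<subseteq> carrier H - {\<one>\<^bsub>H\<^esub>} \<longrightarrow> k \<ge> 1 \<longrightarrow>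
       (\<exists>C D (\<gamma>::nat \<Rightarrow> 'g). C \<union> D = carrier H \<and> C \<inter> D = {} \<and>
          (\<forall>f\<in>F. (f <#\<^bsub>H\<^esub> C) \<inter> C = {}) \<and>
          (\<forall>i\<in>{1..k}. \<gamma> i \<in> carrier H) \<and>
          (\<forall>i\<in>{1..k}. \<forall>j\<in>{1..k}. i \<noteq> j \<longrightarrow> (\<gamma> i <#\<^bsub>H\<^esub> D) \<inter> (\<gamma> j <#\<^bsub>H\<^esub> D) = {})))"

end

theory Submission
  imports Defs
begin

(* There strong hyperbolicity produces three-point orbits, which lets
   one move any two points into any neighbourhood of a limit point.  Part (i) follows
   by iterating a hyperbolic element on a point of the invariant set, part (ii) from
   (i) applied to the closure of the invariant set L_N.  For part (iii), strong
   faithfulness gives a limit point x and a neighbourhood U of x moved off itself by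
   the given finite set F; a conjugate h of the hyperbolic element of N has both
   fixed points in U, and a ping-pong argument with the powers of h splits N as
   required, according to whether an element maps x into U. *)

section \<open>Dynamics of a single map\<close>

definition attracting :: "('a::topological_space \<Rightarrow> 'a) \<Rightarrow> 'a \<Rightarrow> 'a \<Rightarrow> bool" where
  "attracting f a w \<longleftrightarrow> (\<forall>U V. open U \<longrightarrow> a \<in> U \<longrightarrow> open V \<longrightarrow> w \<in> V \<longrightarrow>
        (\<exists>n0. \<forall>n\<ge>n0. (f ^^ n) ` (UNIV - U) \<subseteq> V))"

lemma hyperbolic_with_iff_attracting:
  "hyperbolic_with f a w \<longleftrightarrow>
     f a = a \<and> f w = w \<and> attracting f a w \<and> attracting (inv_into UNIV f) w a"
proof
  assume "hyperbolic_with f a w"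
  then show "f a = a \<and> f w = w \<and> attracting f a w \<and> attracting (inv_into UNIV f) w a"
    unfolding hyperbolic_with_def attracting_def by (intro conjI) meson+
next
  assume parts: "f a = a \<and> f w = w \<and> attracting f a w \<and> attracting (inv_into UNIV f) w a"
  show "hyperbolic_with f a w"
    unfolding hyperbolic_with_def
  proof (intro conjI allI impI)
    fix U V :: "'a set" assume UV: "open U" "a \<in> U" "open V" "w \<in> V"
    obtain n1 where "\<forall>n\<ge>n1. (f ^^ n) ` (UNIV - U) \<subseteq> V"
      using parts UV unfolding attracting_def by meson
    moreover obtain n2 where "\<forall>n\<ge>n2. (inv_into UNIV f ^^ n) ` (UNIV - V) \<subseteq> U"
      using parts UV unfolding attracting_def by meson
    ultimately show "\<exists>n0. \<forall>n\<ge>n0. (f ^^ n) ` (UNIV - U) \<subseteq> V \<and> (inv_into UNIV f ^^ n) ` (UNIV - V) \<subseteq> U"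
      by (intro exI[of _ "max n1 n2"]) auto
  qed (use parts in simp_all)
qed

text \<open>An attracting map has no periodic points other than a and w: a periodic orbit
  returns infinitely often to a point that eventually must lie near w.\<close>
lemma attracting_periodic_point:
  fixes f :: "'a::t1_space \<Rightarrow> 'a"
  assumes "attracting f a w" and "0 < p" and periodic: "(f ^^ p) z = z"
  shows "z = a \<or> z = w"
proof (rule ccontr)
  assume "\<not> (z = a \<or> z = w)"
  then have "z \<noteq> a" "z \<noteq> w" by simp_all
  obtain U where U: "open U" "a \<in> U" "z \<notin> U" using t1_space \<open>z \<noteq> a\<close> by metis
  obtain V where V: "open V" "w \<in> V" "z \<notin> V" using t1_space \<open>z \<noteq> w\<close> by metis
  obtain n0 where n0: "\<forall>n\<ge>n0. (f ^^ n) ` (UNIV - U) \<subseteq> V"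
    using assms(1) U V unfolding attracting_def by blast
  have return: "(f ^^ (p * n)) z = z" for n
  proof (induction n)
    case (Suc n)
    have "(f ^^ (p * Suc n)) z = (f ^^ p) ((f ^^ (p * n)) z)"
      by (simp add: funpow_add)
    then show ?case using Suc periodic by simp
  qed simp
  have "n0 \<le> p * n0" using \<open>0 < p\<close> by simp
  then have "(f ^^ (p * n0)) ` (UNIV - U) \<subseteq> V" using n0 by blast
  then have "(f ^^ (p * n0)) z \<in> V" using U(3) by blast
  then show False using V(3) return by simp
qed

lemma funpow_conjugate:
  assumes "\<And>y. Q (P y) = y" and "\<And>y. P (Q y) = y"
  shows "(\<lambda>y. P (f (Q y))) ^^ n = (\<lambda>y. P ((f ^^ n) (Q y)))"
  by (induction n) (use assms in \<open>auto simp: fun_eq_iff\<close>)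

lemma attracting_conjugate:
  fixes P Q :: "'a::topological_space \<Rightarrow> 'a"
  assumes QP: "\<And>y. Q (P y) = y" and PQ: "\<And>y. P (Q y) = y" and "continuous_on UNIV P"
    and "attracting f a w"
  shows "attracting (\<lambda>y. P (f (Q y))) (P a) (P w)"
  unfolding attracting_def
proof (intro allI impI)
  fix U V :: "'a set" assume UV: "open U" "P a \<in> U" "open V" "P w \<in> V"
  have "open (P -` U)" "open (P -` V)"
    using \<open>continuous_on UNIV P\<close> UV continuous_on_open_vimage[of UNIV P] by auto
  then obtain n0 where n0: "\<forall>n\<ge>n0. (f ^^ n) ` (UNIV - P -` U) \<subseteq> P -` V"
    using assms(4) UV unfolding attracting_def by (metis vimageI2)
  have "((\<lambda>y. P (f (Q y))) ^^ n) ` (UNIV - U) \<subseteq> V" if "n \<ge> n0" for n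
  proof
    fix z assume "z \<in> ((\<lambda>y. P (f (Q y))) ^^ n) ` (UNIV - U)"
    then obtain y where "y \<notin> U" "z = P ((f ^^ n) (Q y))"
      unfolding funpow_conjugate[OF QP PQ] by auto
    moreover have "Q y \<in> UNIV - P -` U" using \<open>y \<notin> U\<close> PQ by auto
    ultimately show "z \<in> V" using n0 that by blast
  qed
  then show "\<exists>n0. \<forall>n\<ge>n0. ((\<lambda>y. P (f (Q y))) ^^ n) ` (UNIV - U) \<subseteq> V" by blast
qed

lemma hyperbolic_with_conjugate:
  fixes P Q :: "'a::topological_space \<Rightarrow> 'a"
  assumes QP: "\<And>y. Q (P y) = y" and PQ: "\<And>y. P (Q y) = y" and P: "continuous_on UNIV P"
    and "bij f" and hyp: "hyperbolic_with f a w"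
  shows "hyperbolic_with (\<lambda>y. P (f (Q y))) (P a) (P w)"
proof -
  have inv: "inv_into UNIV (\<lambda>y. P (f (Q y))) = (\<lambda>y. P (inv_into UNIV f (Q y)))"
    by (rule inv_equality) (use assms in \<open>auto simp: bij_is_inj bij_is_surj surj_f_inv_f\<close>)
  show ?thesis
    using hyp attracting_conjugate[OF QP PQ P]
    unfolding hyperbolic_with_iff_attracting inv by (simp add: QP)
qed

text \<open>This provides the translates in the Powers property.\<close>
lemma iterates_disjoint_translates:
  assumes "inj f" and "0 < e" and into: "\<forall>n\<ge>e. (f ^^ n) ` (UNIV - U) \<subseteq> U" and "i \<noteq> j"
  shows "(f ^^ (i * e)) ` (UNIV - U) \<inter> (f ^^ (j * e)) ` (UNIV - U) = {}"
proof -
  have no_meet: "(f ^^ (i * e)) y1 \<noteq> (f ^^ (j * e)) y2"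
    if "i < j" "y1 \<notin> U" "y2 \<notin> U" for i j y1 y2
  proof
    assume eq: "(f ^^ (i * e)) y1 = (f ^^ (j * e)) y2"
    obtain k where k: "0 < k" "i + k = j" using \<open>i < j\<close> less_imp_add_positive by blast
    have "(f ^^ (j * e)) y2 = (f ^^ (i * e)) ((f ^^ (k * e)) y2)"
      unfolding k(2)[symmetric] add_mult_distrib funpow_add by simp
    then have "y1 = (f ^^ (k * e)) y2"
      using eq inj_fn[OF \<open>inj f\<close>] by (metis injD)
    moreover have "(f ^^ (k * e)) ` (UNIV - U) \<subseteq> U"
      using into \<open>0 < k\<close> by simp
    ultimately show False using \<open>y1 \<notin> U\<close> \<open>y2 \<notin> U\<close> by auto
  qed
  show ?thesis
  proof (cases "i < j")
    case True
    then show ?thesis using no_meet[of i j] by auto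
  next
    case False
    then have "j < i" using \<open>i \<noteq> j\<close> by simp
    then show ?thesis using no_meet[of j i] by (auto simp: eq_commute)
  qed
qed

lemma moved_point_neighbourhood:
  fixes x :: "'a::t2_space"
  assumes "finite F" and "\<forall>f\<in>F. continuous_on UNIV f \<and> f x \<noteq> x"
  shows "\<exists>U. open U \<and> x \<in> U \<and> (\<forall>f\<in>F. f ` U \<inter> U = {})"
proof -
  have "\<forall>f\<in>F. \<exists>A B. open A \<and> open B \<and> x \<in> A \<and> f x \<in> B \<and> A \<inter> B = {}"
    using assms(2) hausdorff by metis
  then obtain A B where AB: "\<forall>f\<in>F. open (A f) \<and> open (B f) \<and> x \<in> A f \<and> f x \<in> B f \<and> A f \<inter> B f = {}"
    by metis
  define U where "U = (\<Inter>f\<in>F. A f \<inter> f -` B f)"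
  have "open U" unfolding U_def
  proof (rule open_INT[OF \<open>finite F\<close>], intro ballI open_Int)
    fix f assume "f \<in> F"
    then show "open (A f)" "open (f -` B f)"
      using AB assms(2) continuous_on_open_vimage[of UNIV f] by auto
  qed
  moreover have "x \<in> U" unfolding U_def using AB by auto
  moreover have "f ` U \<inter> U = {}" if "f \<in> F" for f
    using AB that unfolding U_def by blast
  ultimately show ?thesis by blast
qed

section \<open>Actions by homeomorphisms\<close>

locale homeo_group_action = group G + group_action G "UNIV :: 'a set" \<phi>
  for G :: "('g, 'm) monoid_scheme" (structure) and \<phi> :: "'g \<Rightarrow> 'a::t2_space \<Rightarrow> 'a" +
  assumes continuous_act: "g \<in> carrier G \<Longrightarrow> continuous_on UNIV (\<phi> g)"

lemma homeo_group_actionI: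
  assumes "group G" and "homeo_action G \<phi>"
  shows "homeo_group_action G \<phi>"
  using assms unfolding homeo_action_def homeo_group_action_def homeo_group_action_axioms_def
  by blast

context homeo_group_action
begin

lemma act_mult: "g \<in> carrier G \<Longrightarrow> h \<in> carrier G \<Longrightarrow> \<phi> (g \<otimes> h) y = \<phi> g (\<phi> h y)"
  using composition_rule by simp

lemma act_one: "\<phi> \<one> y = y"
  using id_eq_one by (metis UNIV_I restrict_apply')

lemma act_inv:
  assumes "g \<in> carrier G"
  shows "\<phi> (inv g) (\<phi> g y) = y" and "\<phi> g (\<phi> (inv g) y) = y"
  using act_mult[of "inv g" g y] act_mult[of g "inv g" y] assms by (simp_all add: act_one)

lemma act_bij: "g \<in> carrier G \<Longrightarrow> bij (\<phi> g)"
  using bij_prop0 unfolding Bij_def by simp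

lemma act_pow:
  assumes "h \<in> carrier G"
  shows "\<phi> (h [^] (n::nat)) = \<phi> h ^^ n"
proof (induction n)
  case (Suc n)
  have "\<phi> (h [^] Suc n) y = (\<phi> h ^^ Suc n) y" for y
    using act_mult[of "h [^] n" h y] assms Suc by (simp add: funpow_swap1)
  then show ?case by blast
qed (simp add: act_one fun_eq_iff)

lemma hyperbolic_with_conj:
  assumes "g \<in> carrier G" and "n \<in> carrier G" and "hyperbolic_with (\<phi> n) a w"
  shows "hyperbolic_with (\<phi> (g \<otimes> n \<otimes> inv g)) (\<phi> g a) (\<phi> g w)"
proof -
  have "\<phi> (g \<otimes> n \<otimes> inv g) = (\<lambda>y. \<phi> g (\<phi> n (\<phi> (inv g) y)))"
    using assms(1,2) by (simp add: fun_eq_iff act_mult)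
  then show ?thesis
    using hyperbolic_with_conjugate[OF act_inv[OF assms(1)] continuous_act act_bij assms(3)] assms
    by simp
qed

lemma limset_normal_invariant:
  assumes "N \<lhd> G" and "g \<in> carrier G"
  shows "\<phi> g ` limset (\<phi> ` N) \<subseteq> limset (\<phi> ` N)"
proof
  fix \<eta>' assume "\<eta>' \<in> \<phi> g ` limset (\<phi> ` N)"
  then obtain \<eta> where "\<eta> \<in> limset (\<phi> ` N)" and \<eta>': "\<eta>' = \<phi> g \<eta>" by blast
  then obtain n a where n: "n \<in> N" "hyperbolic_with (\<phi> n) a \<eta>"
    unfolding limset_def by auto
  have "n \<in> carrier G" using n(1) assms(1) by (meson normal_imp_subgroup subgroup.mem_carrier)
  then have "hyperbolic_with (\<phi> (g \<otimes> n \<otimes> inv g)) (\<phi> g a) \<eta>'"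
    unfolding \<eta>' using hyperbolic_with_conj assms(2) n(2) by simp
  moreover have "g \<otimes> n \<otimes> inv g \<in> N"
    using normal.inv_op_closed2[OF assms n(1)] .
  ultimately show "\<eta>' \<in> limset (\<phi> ` N)" unfolding limset_def by auto
qed

end

section \<open>Powers groups\<close>

definition powers_partition ::
  "('g, 'm) monoid_scheme \<Rightarrow> 'g set \<Rightarrow> 'g set \<Rightarrow> 'g set \<Rightarrow> 'g set \<Rightarrow> (nat \<Rightarrow> 'g) \<Rightarrow> bool" where
  "powers_partition G N F C D \<gamma> \<longleftrightarrow> C \<union> D = N \<and> C \<inter> D = {} \<and>
     (\<forall>f\<in>F. \<forall>c\<in>C. f \<otimes>\<^bsub>G\<^esub> c \<notin> C) \<and> (\<forall>i. \<gamma> i \<in> N) \<and>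
     (\<forall>i j. i \<noteq> j \<longrightarrow> (\<forall>d1\<in>D. \<forall>d2\<in>D. \<gamma> i \<otimes>\<^bsub>G\<^esub> d1 \<noteq> \<gamma> j \<otimes>\<^bsub>G\<^esub> d2))"

text \<open>Such partitions for every finite F show that N is a Powers group; the
  translates required there are the first k of the \<gamma> i, and the cosets of the
  definition are rewritten elementwise.\<close>
lemma powers_groupI:
  fixes G :: "('g, 'm) monoid_scheme"
  assumes "N \<noteq> {\<one>\<^bsub>G\<^esub>}"
    and partition: "\<And>F. finite F \<Longrightarrow> F \<subseteq> N - {\<one>\<^bsub>G\<^esub>} \<Longrightarrow> \<exists>C D \<gamma>. powers_partition G N F C D \<gamma>"
  shows "powers_group (G\<lparr>carrier := N\<rparr>)"
  unfolding powers_group_def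
proof (intro conjI allI impI)
  show "carrier (G\<lparr>carrier := N\<rparr>) \<noteq> {\<one>\<^bsub>G\<lparr>carrier := N\<rparr>\<^esub>}" using assms(1) by simp
  fix F and k :: nat
  assume "finite F" "F \<subseteq> carrier (G\<lparr>carrier := N\<rparr>) - {\<one>\<^bsub>G\<lparr>carrier := N\<rparr>\<^esub>}"
  then have "F \<subseteq> N - {\<one>\<^bsub>G\<^esub>}" by simp
  then obtain C D \<gamma> where "powers_partition G N F C D \<gamma>"
    using partition[OF \<open>finite F\<close>] by auto
  then have CD: "C \<union> D = N" "C \<inter> D = {}"
    "\<forall>f\<in>F. \<forall>c\<in>C. f \<otimes>\<^bsub>G\<^esub> c \<notin> C" "\<forall>i. \<gamma> i \<in> N"
    "\<forall>i j. i \<noteq> j \<longrightarrow> (\<forall>d1\<in>D. \<forall>d2\<in>D. \<gamma> i \<otimes>\<^bsub>G\<^esub> d1 \<noteq> \<gamma> j \<otimes>\<^bsub>G\<^esub> d2)"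
    unfolding powers_partition_def by simp_all
  show "\<exists>C D (\<gamma>::nat \<Rightarrow> 'g). C \<union> D = carrier (G\<lparr>carrier := N\<rparr>) \<and> C \<inter> D = {} \<and>
      (\<forall>f\<in>F. (f <#\<^bsub>G\<lparr>carrier := N\<rparr>\<^esub> C) \<inter> C = {}) \<and>
      (\<forall>i\<in>{1..k}. \<gamma> i \<in> carrier (G\<lparr>carrier := N\<rparr>)) \<and>
      (\<forall>i\<in>{1..k}. \<forall>j\<in>{1..k}. i \<noteq> j \<longrightarrow>
         (\<gamma> i <#\<^bsub>G\<lparr>carrier := N\<rparr>\<^esub> D) \<inter> (\<gamma> j <#\<^bsub>G\<lparr>carrier := N\<rparr>\<^esub> D) = {})"
  proof (intro exI conjI)
    show "\<forall>f\<in>F. (f <#\<^bsub>G\<lparr>carrier := N\<rparr>\<^esub> C) \<inter> C = {}"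
      using CD(3) unfolding l_coset_def by auto
    show "\<forall>i\<in>{1..k}. \<forall>j\<in>{1..k}. i \<noteq> j \<longrightarrow>
         (\<gamma> i <#\<^bsub>G\<lparr>carrier := N\<rparr>\<^esub> D) \<inter> (\<gamma> j <#\<^bsub>G\<lparr>carrier := N\<rparr>\<^esub> D) = {}"
      using CD(5) unfolding l_coset_def by fastforce
  qed (use CD in simp_all)
qed

lemma (in homeo_group_action) ping_pong_powers_partition:
  assumes "subgroup N G" and "F \<subseteq> N" and moved: "\<forall>f\<in>F. \<phi> f ` U \<inter> U = {}"
    and "h \<in> N" and "0 < e" and into: "\<forall>n\<ge>e. (\<phi> h ^^ n) ` (UNIV - U) \<subseteq> U"
  shows "powers_partition G N F {z \<in> N. \<phi> z x \<in> U} {z \<in> N. \<phi> z x \<notin> U} (\<lambda>i. h [^] (i * e))"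
proof -
  have NG: "N \<subseteq> carrier G" using assms(1) by (rule subgroup.subset)
  have hG: "h \<in> carrier G" using \<open>h \<in> N\<close> NG by auto
  have powers_in_N: "h [^] (n::nat) \<in> N" for n
    using monoid.nat_pow_closed[OF group.is_monoid[OF subgroup.subgroup_is_group[OF assms(1) is_group]]]
      \<open>h \<in> N\<close> unfolding nat_pow_consistent[where H = N] by simp
  have C_moved: "\<phi> (f \<otimes> c) x \<notin> U" if "f \<in> F" "c \<in> N" "\<phi> c x \<in> U" for f c
  proof -
    have "f \<in> carrier G" "c \<in> carrier G" using that assms(2) NG by auto
    then show ?thesis using moved that by (auto simp: act_mult)
  qed
  have D_disjoint: "h [^] (i * e) \<otimes> d1 \<noteq> h [^] (j * e) \<otimes> d2"
    if "i \<noteq> j" "d1 \<in> N" "d2 \<in> N" "\<phi> d1 x \<notin> U" "\<phi> d2 x \<notin> U" for i j d1 d2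
  proof
    assume "h [^] (i * e) \<otimes> d1 = h [^] (j * e) \<otimes> d2"
    moreover have "d1 \<in> carrier G" "d2 \<in> carrier G" using that(2,3) NG by auto
    ultimately have "(\<phi> h ^^ (i * e)) (\<phi> d1 x) = (\<phi> h ^^ (j * e)) (\<phi> d2 x)"
      using hG by (metis act_mult act_pow nat_pow_closed)
    moreover have "\<phi> d1 x \<in> UNIV - U" "\<phi> d2 x \<in> UNIV - U" using that(4,5) by auto
    ultimately show False
      using iterates_disjoint_translates[OF act_bij[OF hG, THEN bij_is_inj] \<open>0 < e\<close> into \<open>i \<noteq> j\<close>]
      by auto
  qed
  show ?thesis
    unfolding powers_partition_def using C_moved D_disjoint powers_in_N by auto
qed

section \<open>Strongly hyperbolic actions\<close>

locale strongly_hyperbolic_action = homeo_group_action +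
  assumes strongly_hyperbolic: "strongly_hyperbolic G \<phi>"

context strongly_hyperbolic_action
begin

text \<open>Every orbit has at least three points: one of the two transverse hyperbolic
  elements moves c, and it cannot swap c with its image because its only periodic
  points are its fixed points.\<close>
lemma three_point_orbit:
  "\<exists>t\<in>carrier G. \<phi> t c \<noteq> c \<and> \<phi> t (\<phi> t c) \<noteq> c \<and> \<phi> t (\<phi> t c) \<noteq> \<phi> t c"
proof -
  obtain t where t: "t \<in> carrier G" "hyperbolic (\<phi> t)" "\<phi> t c \<noteq> c"
  proof -
    obtain g h where "g \<in> carrier G" "h \<in> carrier G" "hyperbolic (\<phi> g)" "hyperbolic (\<phi> h)"
      "transverse (\<phi> g) (\<phi> h)"
      using strongly_hyperbolic unfolding strongly_hyperbolic_def by auto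
    then show thesis using that unfolding transverse_def by metis
  qed
  then obtain a w where "hyperbolic_with (\<phi> t) a w" unfolding hyperbolic_def by auto
  then have fixed: "\<phi> t a = a" "\<phi> t w = w" and attr: "attracting (\<phi> t) a w"
    unfolding hyperbolic_with_iff_attracting by auto
  have "c \<noteq> a" "c \<noteq> w" using fixed t(3) by auto
  then have "(\<phi> t ^^ 2) c \<noteq> c" using attracting_periodic_point[OF attr, of 2 c] by auto
  moreover have "\<phi> t (\<phi> t c) \<noteq> \<phi> t c"
    using t(3) act_bij[OF t(1)] by (metis bij_is_inj injD)
  ultimately show ?thesis using t(1,3) by (auto simp: numeral_2_eq_2)
qed

text \<open>Hence the identity is not hyperbolic: all points of the space would be among
  its two fixed points.\<close>
lemma hyperbolic_not_one:
  assumes "hyperbolic (\<phi> n)"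
  shows "n \<noteq> \<one>"
proof
  assume "n = \<one>"
  obtain a w where attr: "attracting (\<phi> n) a w"
    using assms unfolding hyperbolic_def hyperbolic_with_iff_attracting by auto
  have "z = a \<or> z = w" for z
    using attracting_periodic_point[OF attr, of 1 z] \<open>n = \<one>\<close> by (simp add: act_one)
  moreover obtain t where "\<phi> t a \<noteq> a" "\<phi> t (\<phi> t a) \<noteq> a" "\<phi> t (\<phi> t a) \<noteq> \<phi> t a"
    using three_point_orbit by auto
  ultimately show False by metis
qed

text \<open>Any point can be moved off any two given points, since one of the three points
  of a three-point orbit avoids both.\<close>
lemma move_off_two_points: "\<exists>r\<in>carrier G. \<phi> r c \<noteq> a \<and> \<phi> r c \<noteq> b"
proof -
  obtain t where t: "t \<in> carrier G" "\<phi> t c \<noteq> c" "\<phi> t (\<phi> t c) \<noteq> c" "\<phi> t (\<phi> t c) \<noteq> \<phi> t c"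
    using three_point_orbit by auto
  consider "c \<noteq> a \<and> c \<noteq> b" | "\<phi> t c \<noteq> a \<and> \<phi> t c \<noteq> b" | "\<phi> t (\<phi> t c) \<noteq> a \<and> \<phi> t (\<phi> t c) \<noteq> b"
    using t by metis
  then show ?thesis
  proof cases
    case 1
    then show ?thesis using act_one[of c] one_closed by metis
  next
    case 2
    then show ?thesis using t(1) by auto
  next
    case 3
    then show ?thesis using act_mult[OF t(1) t(1), of c] t(1) m_closed by metis
  qed
qed

text \<open>Any two points can be moved together into any neighbourhood U of a limit point x:
  move them off the repelling point c of a hyperbolic element s attracting towards x,
  then apply a high power of s.\<close>
lemma move_pair_near_limit_point:
  assumes "x \<in> limset (\<phi> ` carrier G)" and "open U" and "x \<in> U"
  shows "\<exists>g\<in>carrier G. \<phi> g a \<in> U \<and> \<phi> g b \<in> U"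
proof -
  obtain s c where s: "s \<in> carrier G" "hyperbolic_with (\<phi> s) c x"
    using assms(1) unfolding limset_def by auto
  obtain r where r: "r \<in> carrier G" "\<phi> r c \<noteq> a" "\<phi> r c \<noteq> b"
    using move_off_two_points[of c a b] by auto
  have off_c: "\<phi> (inv r) a \<noteq> c" "\<phi> (inv r) b \<noteq> c"
    using r act_inv(2)[OF r(1)] by metis+
  obtain W1 where W1: "open W1" "c \<in> W1" "\<phi> (inv r) a \<notin> W1"
    using t1_space off_c(1) by metis
  obtain W2 where W2: "open W2" "c \<in> W2" "\<phi> (inv r) b \<notin> W2"
    using t1_space off_c(2) by metis
  have "attracting (\<phi> s) c x" using s(2) unfolding hyperbolic_with_iff_attracting by auto
  then obtain m where "\<forall>n\<ge>m. (\<phi> s ^^ n) ` (UNIV - W1 \<inter> W2) \<subseteq> U"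
    using W1 W2 assms(2,3) unfolding attracting_def by (meson IntI open_Int)
  then have into: "(\<phi> s ^^ m) ` (UNIV - W1 \<inter> W2) \<subseteq> U" by auto
  define g where "g = s [^] m \<otimes> inv r"
  have image_g: "\<phi> g y = (\<phi> s ^^ m) (\<phi> (inv r) y)" for y
    unfolding g_def using s(1) r(1) by (simp add: act_mult act_pow)
  have "\<phi> g y \<in> U" if "\<phi> (inv r) y \<notin> W1 \<inter> W2" for y
    unfolding image_g using that by (intro subsetD[OF into] imageI) simp
  moreover have "g \<in> carrier G" unfolding g_def using s(1) r(1) by simp
  ultimately show ?thesis using W1(3) W2(3) by auto
qed

text \<open>Part (i): a non-empty closed invariant set C contains every attracting point
  \<eta> of a hyperbolic element \<gamma>, as the \<gamma>-orbit of a point of C other than the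
  repelling point of \<gamma> accumulates at \<eta>.\<close>
lemma limset_closure_minimal:
  assumes "closed C" and "C \<noteq> {}" and invariant: "\<forall>g\<in>carrier G. \<phi> g ` C \<subseteq> C"
  shows "closure (limset (\<phi> ` carrier G)) \<subseteq> C"
proof (rule closure_minimal[OF _ \<open>closed C\<close>])
  show "limset (\<phi> ` carrier G) \<subseteq> C"
  proof
    fix \<eta> assume "\<eta> \<in> limset (\<phi> ` carrier G)"
    then obtain \<gamma> \<alpha> where \<gamma>: "\<gamma> \<in> carrier G" "hyperbolic_with (\<phi> \<gamma>) \<alpha> \<eta>"
      unfolding limset_def by auto
    have stays: "\<phi> g y \<in> C" if "g \<in> carrier G" "y \<in> C" for g y
      using invariant that by auto
    obtain z where z: "z \<in> C" "z \<noteq> \<alpha>"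
    proof -
      obtain y where "y \<in> C" using \<open>C \<noteq> {}\<close> by auto
      moreover obtain t where "t \<in> carrier G" "\<phi> t y \<noteq> y" using three_point_orbit by auto
      ultimately show thesis using that stays by metis
    qed
    have orbit: "(\<phi> \<gamma> ^^ n) z \<in> C" for n
      by (induction n) (simp_all add: z(1) stays \<gamma>(1))
    show "\<eta> \<in> C"
    proof (rule ccontr)
      assume "\<eta> \<notin> C"
      obtain U where U: "open U" "\<alpha> \<in> U" "z \<notin> U" using t1_space z(2) by metis
      have "attracting (\<phi> \<gamma>) \<alpha> \<eta>" using \<gamma>(2) unfolding hyperbolic_with_iff_attracting by auto
      then obtain n0 where "\<forall>n\<ge>n0. (\<phi> \<gamma> ^^ n) ` (UNIV - U) \<subseteq> - C"
        using U \<open>closed C\<close> \<open>\<eta> \<notin> C\<close> unfolding attracting_def by (meson ComplI open_Compl)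
      then have "(\<phi> \<gamma> ^^ n0) z \<in> - C" using U(3) by auto
      then show False using orbit by auto
    qed
  qed
qed

text \<open>Part (ii): the closure of the limit set of a normal subgroup N containing a
  hyperbolic element is a non-empty closed invariant set, hence contains that of the
  whole group by part (i).\<close>
lemma normal_limset_closure:
  assumes "N \<lhd> G" and "n0 \<in> N" and "hyperbolic (\<phi> n0)"
  shows "closure (limset (\<phi> ` N)) = closure (limset (\<phi> ` carrier G))"
proof
  have "N \<subseteq> carrier G" using assms(1) by (simp add: normal_imp_subgroup subgroup.subset)
  then show "closure (limset (\<phi> ` N)) \<subseteq> closure (limset (\<phi> ` carrier G))"
    unfolding limset_def by (intro closure_mono) auto
  let ?L = "limset (\<phi> ` N)"
  show "closure (limset (\<phi> ` carrier G)) \<subseteq> closure ?L"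
  proof (rule limset_closure_minimal)
    obtain a w where "hyperbolic_with (\<phi> n0) a w" using assms(3) unfolding hyperbolic_def by auto
    then have "w \<in> ?L" using assms(2) unfolding limset_def by auto
    then show "closure ?L \<noteq> {}" using closure_subset by auto
    show "\<forall>g\<in>carrier G. \<phi> g ` closure ?L \<subseteq> closure ?L"
    proof
      fix g assume "g \<in> carrier G"
      show "\<phi> g ` closure ?L \<subseteq> closure ?L"
      proof (rule image_closure_subset)
        show "continuous_on (closure ?L) (\<phi> g)"
          using continuous_act[OF \<open>g \<in> carrier G\<close>] continuous_on_subset by blast
        show "\<phi> g ` ?L \<subseteq> closure ?L"
          using limset_normal_invariant[OF assms(1) \<open>g \<in> carrier G\<close>] closure_subset by auto
      qed simp
    qed
  qed simp
qed

text \<open>A normal subgroup containing a hyperbolic element n0 contains hyperbolic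
  elements with both fixed points in any neighbourhood of any limit point: conjugate
  n0 by an element moving both fixed points of n0 into the neighbourhood.\<close>
lemma normal_hyperbolic_near_limit_point:
  assumes "N \<lhd> G" and "n0 \<in> N" and "hyperbolic_with (\<phi> n0) a0 w0"
    and "x \<in> limset (\<phi> ` carrier G)" and "open U" and "x \<in> U"
  shows "\<exists>h\<in>N. \<exists>a w. hyperbolic_with (\<phi> h) a w \<and> a \<in> U \<and> w \<in> U"
proof -
  obtain g where g: "g \<in> carrier G" "\<phi> g a0 \<in> U" "\<phi> g w0 \<in> U"
    using move_pair_near_limit_point[OF assms(4-6), of a0 w0] by auto
  have "n0 \<in> carrier G" using assms(1,2) by (meson normal_imp_subgroup subgroup.mem_carrier)
  then have "hyperbolic_with (\<phi> (g \<otimes> n0 \<otimes> inv g)) (\<phi> g a0) (\<phi> g w0)"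
    using hyperbolic_with_conj g(1) assms(3) by simp
  moreover have "g \<otimes> n0 \<otimes> inv g \<in> N" using normal.inv_op_closed2[OF assms(1) g(1) assms(2)] .
  ultimately show ?thesis using g(2,3) by auto
qed

text \<open>Strong faithfulness gives a limit point x and a neighbourhood U
  of x that the finite set F moves off itself; N contains a hyperbolic h with both fixed
  points in U, and the ping-pong construction with h yields a Powers partition.\<close>
lemma normal_powers_group:
  assumes faithful: "strongly_faithful_on G \<phi> (limset (\<phi> ` carrier G))"
    and "N \<lhd> G" and "n0 \<in> N" and "hyperbolic (\<phi> n0)"
  shows "powers_group (G\<lparr>carrier := N\<rparr>)"
proof (rule powers_groupI)
  have sub: "subgroup N G" using assms(2) by (rule normal_imp_subgroup)
  then have NG: "N \<subseteq> carrier G" by (rule subgroup.subset)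
  show "N \<noteq> {\<one>}" using assms(3) hyperbolic_not_one[OF assms(4)] by auto
  fix F assume F: "finite F" "F \<subseteq> N - {\<one>}"
  then have "F \<subseteq> carrier G - {\<one>}" using NG by auto
  then obtain x where x: "x \<in> limset (\<phi> ` carrier G)" "\<forall>f\<in>F. \<phi> f x \<noteq> x"
    using faithful F(1) unfolding strongly_faithful_on_def by auto
  have "\<forall>f\<in>\<phi> ` F. continuous_on UNIV f \<and> f x \<noteq> x"
    using x(2) F(2) NG continuous_act by auto
  then have "\<exists>U. open U \<and> x \<in> U \<and> (\<forall>f\<in>\<phi> ` F. f ` U \<inter> U = {})"
    by (rule moved_point_neighbourhood[OF finite_imageI[OF F(1)]])
  then obtain U where U: "open U" "x \<in> U" and moved: "\<forall>f\<in>F. \<phi> f ` U \<inter> U = {}"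
    by auto
  obtain a0 w0 where "hyperbolic_with (\<phi> n0) a0 w0" using assms(4) unfolding hyperbolic_def by auto
  then obtain h a w where h: "h \<in> N" "hyperbolic_with (\<phi> h) a w" "a \<in> U" "w \<in> U"
    using normal_hyperbolic_near_limit_point[OF assms(2,3) _ x(1) U] by meson
  have "attracting (\<phi> h) a w" using h(2) unfolding hyperbolic_with_iff_attracting by auto
  then obtain n1 where "\<forall>n\<ge>n1. (\<phi> h ^^ n) ` (UNIV - U) \<subseteq> U"
    using U(1) h(3,4) unfolding attracting_def by meson
  then have "\<forall>n\<ge>Suc n1. (\<phi> h ^^ n) ` (UNIV - U) \<subseteq> U" by auto
  moreover have "F \<subseteq> N" using F(2) by auto
  ultimately show "\<exists>C D \<gamma>. powers_partition G N F C D \<gamma>"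
    using ping_pong_powers_partition[OF sub _ moved h(1) zero_less_Suc] by blast
qed

end

theorem proposition7p1:
  fixes G :: "('g, 'm) monoid_scheme" and \<phi> :: "'g \<Rightarrow> 'a::t2_space \<Rightarrow> 'a"
  assumes "group G"
    and "homeo_action G \<phi>"
    and "strongly_hyperbolic G \<phi>"
    and "strongly_faithful_on G \<phi> (limset (\<phi> ` carrier G))"
  shows "(\<forall>C. closed C \<longrightarrow> C \<noteq> {} \<longrightarrow> (\<forall>g\<in>carrier G. \<phi> g ` C \<subseteq> C) \<longrightarrow>
            closure (limset (\<phi> ` carrier G)) \<subseteq> C)
       \<and> (\<forall>N. N \<lhd> G \<longrightarrow> (\<exists>n\<in>N. hyperbolic (\<phi> n)) \<longrightarrow>
            closure (limset (\<phi> ` N)) = closure (limset (\<phi> ` carrier G))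
            \<and> powers_group (G\<lparr>carrier := N\<rparr>))"
proof -
  interpret strongly_hyperbolic_action G \<phi>
    using homeo_group_actionI[OF assms(1,2)] assms(3)
    by (simp add: strongly_hyperbolic_action_def strongly_hyperbolic_action_axioms_def)
  show ?thesis
  proof (intro conjI allI impI)
    fix C :: "'a set"
    assume "closed C" "C \<noteq> {}" "\<forall>g\<in>carrier G. \<phi> g ` C \<subseteq> C"
    then show "closure (limset (\<phi> ` carrier G)) \<subseteq> C" by (rule limset_closure_minimal)
  next
    fix N assume "N \<lhd> G" "\<exists>n\<in>N. hyperbolic (\<phi> n)"
    then obtain n0 where "n0 \<in> N" "hyperbolic (\<phi> n0)" by auto
    then show "closure (limset (\<phi> ` N)) = closure (limset (\<phi> ` carrier G))"
      and "powers_group (G\<lparr>carrier := N\<rparr>)"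
      using normal_limset_closure normal_powers_group[OF assms(4)] \<open>N \<lhd> G\<close> by auto
  qed
qed

end
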